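(* Let $(D,k,r)$ be an instance of the Rooted Maximum Leaf Outbranching problem such that $D$ is reduced (none of the reduction rules (0)–(3) below applies to $D$). If $D$ has a vertex of indegree at least $k$, then $D$ has an outbranching rooted at $r$ with at least $k$ leaves. Rules: (0) some vertex of $D$ is not reachable from $r$ by a directed path (then the instance is replaced by a trivially FALSE one); (1) $x$ is a cutvertex of $D$: delete $x$ and add an arc $(v,z)$ for every $v\in N^-(x)$ and $z\in N^+(x)\setminus\{v\}$; (2) $P$ is a bipath of length 4: contract two consecutive internal vertices of $P$; (3) $x$ is a vertex and some $y\in N^-(x)$ is such that $N^-(x)\setminus\{y\}$ cuts $y$ from $r$ (every directed path from $r$ to $y$ meets $N^-(x)\setminus\{y\}$): delete the arc $(y,x)$.
   Context: A rooted digraph is a loopless digraph $D$ with a distinguished vertex $r$ (the root) such that: there is no arc $(u,r)$ for any $u\in V(D)$; there is no arc $(x,y)$ with $x\neq r$ and $y$ an outneighbour of $r$; and $r$ has outdegree at least 2. $N^-(x)$, $N^+(x)$ are the in- and out-neighbourhoods of $x$. A cut of $D$ is a set $S\subseteq V(D)\setminus\{r\}$ such that some vertex $z\notin S$ is not the endpoint of any directed path starting at $r$ in $D-S$; a cutvertex is a cut of size 1. A sequence of distinct vertices $(x_1,\dots,x_l)$, $l\ge 3$, is a bipath of length $l-1$ if the set of arcs incident to $\{x_2,\dots,x_{l-1}\}$ is exactly $\{(x_i,x_{i+1}),(x_{i+1},x_i):1\le i\le l-1\}$. An outbranching of $D$ is a spanning subdigraph which is a directed tree rooted at $r$ with all arcs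 directed away from $r$; its leaves are its vertices of outdegree 0. The Rooted Maximum Leaf Outbranching problem asks whether $D$ has an outbranching rooted at $r$ with at least $k$ leaves. *)

theory Defs
  imports Main
begin

definition in_nbrs :: "('a \<times> 'a) set \<Rightarrow> 'a \<Rightarrow> 'a set" where
  "in_nbrs A x = {u. (u, x) \<in> A}"

definition out_nbrs :: "('a \<times> 'a) set \<Rightarrow> 'a \<Rightarrow> 'a set" where
  "out_nbrs A x = {v. (x, v) \<in> A}"

definition rooted_digraph :: "'a set \<Rightarrow> ('a \<times> 'a) set \<Rightarrow> 'a \<Rightarrow> bool" where
  "rooted_digraph V A r \<longleftrightarrow>
     finite V \<and> r \<in> V \<and> A \<subseteq> V \<times> V \<and>
     (\<forall>x. (x, x) \<notin> A) \<and>
     (\<forall>u. (u, r) \<notin> A) \<and>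
     (\<forall>x y. (x, y) \<in> A \<and> x \<noteq> r \<longrightarrow> y \<notin> out_nbrs A r) \<and>
     card (out_nbrs A r) \<ge> 2"

definition reach_avoid :: "('a \<times> 'a) set \<Rightarrow> 'a set \<Rightarrow> 'a \<Rightarrow> 'a \<Rightarrow> bool" where
  "reach_avoid A S u v \<longleftrightarrow> u \<notin> S \<and> (u, v) \<in> (A \<inter> ((- S) \<times> (- S)))\<^sup>*"

definition is_cut :: "'a set \<Rightarrow> ('a \<times> 'a) set \<Rightarrow> 'a \<Rightarrow> 'a set \<Rightarrow> bool" where
  "is_cut V A r S \<longleftrightarrow> S \<subseteq> V - {r} \<and> (\<exists>z \<in> V - S. \<not> reach_avoid A S r z)"

definition is_cutvertex :: "'a set \<Rightarrow> ('a \<times> 'a) set \<Rightarrow> 'a \<Rightarrow> 'a \<Rightarrow> bool" where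
  "is_cutvertex V A r x \<longleftrightarrow> is_cut V A r {x}"

text \<open>Bipath (x_1,...,x_l), l \<ge> 3, of length l - 1.\<close>
definition is_bipath :: "'a set \<Rightarrow> ('a \<times> 'a) set \<Rightarrow> 'a list \<Rightarrow> bool" where
  "is_bipath V A xs \<longleftrightarrow>
     length xs \<ge> 3 \<and> distinct xs \<and> set xs \<subseteq> V \<and>
     {(u, v) \<in> A. u \<in> set (butlast (tl xs)) \<or> v \<in> set (butlast (tl xs))} =
       {(xs ! i, xs ! (i + 1)) | i. i + 1 < length xs} \<union>
       {(xs ! (i + 1), xs ! i) | i. i + 1 < length xs}"

definition cuts_from :: "('a \<times> 'a) set \<Rightarrow> 'a \<Rightarrow> 'a set \<Rightarrow> 'a \<Rightarrow> bool" where
  "cuts_from A r S y \<longleftrightarrow> \<not> reach_avoid A S r y"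

definition reduced :: "'a set \<Rightarrow> ('a \<times> 'a) set \<Rightarrow> 'a \<Rightarrow> bool" where
  "reduced V A r \<longleftrightarrow>
     \<comment> \<open>(0)\<close> (\<forall>z \<in> V. reach_avoid A {} r z) \<and>
     \<comment> \<open>(1)\<close> (\<forall>x. \<not> is_cutvertex V A r x) \<and>
     \<comment> \<open>(2)\<close> (\<forall>xs. \<not> (is_bipath V A xs \<and> length xs = 5)) \<and>
     \<comment> \<open>(3)\<close> (\<forall>x \<in> V. \<forall>y \<in> in_nbrs A x. \<not> cuts_from A r (in_nbrs A x - {y}) y)"

definition is_outbranching :: "'a set \<Rightarrow> ('a \<times> 'a) set \<Rightarrow> 'a \<Rightarrow> ('a \<times> 'a) set \<Rightarrow> bool" where
  "is_outbranching V A r B \<longleftrightarrow>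
     B \<subseteq> A \<and> r \<in> V \<and>
     in_nbrs B r = {} \<and>
     (\<forall>v \<in> V - {r}. card (in_nbrs B v) = 1) \<and>
     (\<forall>v \<in> V. (r, v) \<in> B\<^sup>*)"

definition leaves :: "'a set \<Rightarrow> ('a \<times> 'a) set \<Rightarrow> 'a set" where
  "leaves V B = {v \<in> V. out_nbrs B v = {}}"

end

theory Submission
  imports Defs
begin

text \<open>Let \<open>Y = N\<^sup>-(x)\<close> with \<open>|Y| \<ge> k\<close>. Since rule (3) does not apply, every \<open>y \<in> Y\<close> is
  reachable from \<open>r\<close> avoiding \<open>Y - {y}\<close>, hence by a path that uses no arc out of \<open>Y\<close>. So after
  deleting all arcs out of \<open>Y\<close>, \<open>r\<close> still reaches all of \<open>Y\<close>, and any out-tree spanning the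
  vertices it reaches has all of \<open>Y\<close> as leaves. Since rule (0) does not apply, this out-tree can
  be grown to an outbranching of \<open>D\<close> one arc at a time, and hanging a new leaf below a vertex
  never decreases the number of leaves.\<close>

lemma rtrancl_exit_arc:
  assumes "(a, b) \<in> R\<^sup>*" "a \<in> U" "b \<notin> U"
  shows "\<exists>x y. (x, y) \<in> R \<and> x \<in> U \<and> y \<notin> U"
  using assms by (induction rule: rtrancl_induct) auto

lemma rtrancl_without_arcs_from_target:
  assumes "(a, b) \<in> R\<^sup>*"
  shows "(a, b) \<in> (R \<inter> (- {b}) \<times> UNIV)\<^sup>*"
  using assms
proof (induction rule: converse_rtrancl_induct)
  case base
  then show ?case by simp
next
  case (step a a')
  then show ?case
    by (cases "a = b") (auto intro: converse_rtrancl_into_rtrancl)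
qed

lemma rtrancl_restrict_reachable:
  assumes "(r, w) \<in> R\<^sup>*"
  shows "(r, w) \<in> (R \<inter> (R\<^sup>* `` {r}) \<times> (R\<^sup>* `` {r}))\<^sup>*"
  using assms
proof (induction rule: rtrancl_induct)
  case base
  then show ?case by simp
next
  case (step y z)
  then have "(y, z) \<in> R \<inter> (R\<^sup>* `` {r}) \<times> (R\<^sup>* `` {r})"
    by (auto intro: rtrancl_into_rtrancl)
  with step.IH show ?case
    by (rule rtrancl_into_rtrancl)
qed

lemma rtrancl_Image_subset:
  assumes "R \<subseteq> V \<times> V" "a \<in> V"
  shows "R\<^sup>* `` {a} \<subseteq> V"
proof
  fix b
  assume "b \<in> R\<^sup>* `` {a}"
  then have "(a, b) \<in> R\<^sup>*" by simp
  then show "b \<in> V"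
    using assms by (induction rule: rtrancl_induct) auto
qed

definition out_tree :: "('a \<times> 'a) set \<Rightarrow> 'a set \<Rightarrow> ('a \<times> 'a) set \<Rightarrow> 'a \<Rightarrow> bool" where
  "out_tree A U B r \<longleftrightarrow> is_outbranching U A r B \<and> B \<subseteq> U \<times> U"

lemma out_tree_root: "out_tree A {r} {} r"
  unfolding out_tree_def is_outbranching_def in_nbrs_def by auto

lemma out_tree_mono: "out_tree A U B r \<Longrightarrow> A \<subseteq> A' \<Longrightarrow> out_tree A' U B r"
  unfolding out_tree_def is_outbranching_def by blast

lemma out_tree_add_leaf:
  assumes tree: "out_tree A U B r" and uv: "(u, v) \<in> A" "u \<in> U" "v \<notin> U"
  shows "out_tree A (insert v U) (insert (u, v) B) r"
proof -
  let ?B = "insert (u, v) B"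
  have B: "B \<subseteq> A" "B \<subseteq> U \<times> U" "r \<in> U" "in_nbrs B r = {}"
    "\<forall>w \<in> U - {r}. card (in_nbrs B w) = 1" "\<forall>w \<in> U. (r, w) \<in> B\<^sup>*"
    using tree unfolding out_tree_def is_outbranching_def by auto
  have in_v: "in_nbrs ?B v = {u}"
    using B(2) uv(3) unfolding in_nbrs_def by auto
  have in_other: "in_nbrs ?B w = in_nbrs B w" if "w \<noteq> v" for w
    using that unfolding in_nbrs_def by auto
  have reach_v: "(r, v) \<in> ?B\<^sup>*"
    using B(6) uv(2) rtrancl_mono[of B ?B] by (blast intro: rtrancl_into_rtrancl)
  have "\<forall>w \<in> U. (r, w) \<in> ?B\<^sup>*"
    using B(6) rtrancl_mono[of B ?B] by blast
  moreover have "in_nbrs ?B r = {}"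
    using in_other[of r] B(3,4) uv(3) by auto
  moreover have "card (in_nbrs ?B w) = 1" if "w \<in> insert v U - {r}" for w
    using that B(5) by (cases "w = v") (simp_all add: in_v in_other)
  ultimately show ?thesis
    unfolding out_tree_def is_outbranching_def using B uv reach_v by auto
qed

lemma leaves_add_leaf:
  assumes "B \<subseteq> U \<times> U" "u \<in> U" "v \<notin> U"
  shows "insert v (leaves U B - {u}) \<subseteq> leaves (insert v U) (insert (u, v) B)"
  using assms unfolding leaves_def out_nbrs_def by auto

lemma card_leaves_add_leaf:
  assumes "finite U" "B \<subseteq> U \<times> U" "u \<in> U" "v \<notin> U"
  shows "card (leaves U B) \<le> card (leaves (insert v U) (insert (u, v) B))"
proof -
  have fin: "finite (leaves U B)" "finite (leaves (insert v U) (insert (u, v) B))"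
    using assms(1) unfolding leaves_def by auto
  have "v \<notin> leaves U B"
    using assms(4) unfolding leaves_def by simp
  then have "card (leaves U B) \<le> card (insert v (leaves U B - {u}))"
    using fin(1) by (cases "u \<in> leaves U B") (auto simp: card_Diff_singleton_if card_gt_0_iff)
  also have "\<dots> \<le> card (leaves (insert v U) (insert (u, v) B))"
    using card_mono[OF fin(2) leaves_add_leaf[OF assms(2-4)]] .
  finally show ?thesis .
qed

text \<open>Paths inside \<open>W\<close> are required so that the arc leaving the current tree lands in \<open>W\<close>.\<close>

lemma out_tree_extend:
  assumes W: "finite W" "\<forall>w \<in> W. (r, w) \<in> (A \<inter> W \<times> W)\<^sup>*"
  shows "out_tree A U B r \<Longrightarrow> U \<subseteq> W \<Longrightarrow>
    \<exists>B'. out_tree A W B' r \<and> card (leaves U B) \<le> card (leaves W B')"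
proof (induction "card (W - U)" arbitrary: U B)
  case 0
  then have "U = W" using W(1) by auto
  with 0 show ?case by auto
next
  case (Suc n)
  have "W - U \<noteq> {}"
    using Suc.hyps(2) by (metis card.empty nat.distinct(1))
  then obtain w where w: "w \<in> W" "w \<notin> U"
    by blast
  have "r \<in> U" "B \<subseteq> U \<times> U"
    using Suc.prems(1) unfolding out_tree_def is_outbranching_def by auto
  then obtain u v where uv: "(u, v) \<in> A \<inter> W \<times> W" "u \<in> U" "v \<notin> U"
    using rtrancl_exit_arc[OF W(2)[rule_format, OF w(1)] _ w(2)] by blast
  let ?U = "insert v U" and ?B = "insert (u, v) B"
  have "v \<in> W - U"
    using uv by blast
  then have "card (W - U - {v}) = n"
    using Suc.hyps(2) W(1) by (metis card_Diff_singleton diff_Suc_1)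
  moreover have "W - ?U = W - U - {v}"
    by blast
  ultimately have "n = card (W - ?U)"
    by simp
  moreover have "out_tree A ?U ?B r"
    using out_tree_add_leaf[OF Suc.prems(1) _ uv(2,3)] uv(1) by blast
  moreover have "?U \<subseteq> W"
    using Suc.prems(2) \<open>v \<in> W - U\<close> by blast
  ultimately obtain B' where B': "out_tree A W B' r" "card (leaves ?U ?B) \<le> card (leaves W B')"
    using Suc.hyps(1)[of ?U ?B] by blast
  have "card (leaves U B) \<le> card (leaves ?U ?B)"
    using card_leaves_add_leaf[OF finite_subset[OF Suc.prems(2) W(1)] \<open>B \<subseteq> U \<times> U\<close> uv(2,3)] .
  with B' show ?case by auto
qed

lemma outbranching_extending_out_tree:
  assumes "finite V" "A \<subseteq> V \<times> V" "\<forall>w \<in> V. (r, w) \<in> A\<^sup>*"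
    and "out_tree A U B r" "U \<subseteq> V"
  shows "\<exists>B'. is_outbranching V A r B' \<and> card (leaves U B) \<le> card (leaves V B')"
proof -
  have "A \<inter> V \<times> V = A" using assms(2) by blast
  then obtain B' where "out_tree A V B' r" "card (leaves U B) \<le> card (leaves V B')"
    using out_tree_extend[of V r A U B] assms by auto
  then show ?thesis unfolding out_tree_def by blast
qed

lemma out_tree_of_reachable:
  assumes "finite V" "A \<subseteq> V \<times> V" "r \<in> V"
  shows "\<exists>B. out_tree A (A\<^sup>* `` {r}) B r"
proof -
  let ?U = "A\<^sup>* `` {r}"
  have fin: "finite ?U"
    using finite_subset[OF rtrancl_Image_subset[OF assms(2,3)] assms(1)] .
  have reach: "\<forall>w \<in> ?U. (r, w) \<in> (A \<inter> ?U \<times> ?U)\<^sup>*"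
    using rtrancl_restrict_reachable by fastforce
  have "{r} \<subseteq> ?U"
    by simp
  then show ?thesis
    using out_tree_extend[OF fin reach out_tree_root] by blast
qed

lemma reach_avoid_without_arcs_out_of:
  assumes "reach_avoid A (Y - {y}) r y"
  shows "(r, y) \<in> (A \<inter> (- Y) \<times> UNIV)\<^sup>*"
proof -
  let ?S = "Y - {y}"
  have "(r, y) \<in> (A \<inter> (- ?S) \<times> (- ?S) \<inter> (- {y}) \<times> UNIV)\<^sup>*"
    using assms unfolding reach_avoid_def by (blast intro: rtrancl_without_arcs_from_target)
  moreover have "A \<inter> (- ?S) \<times> (- ?S) \<inter> (- {y}) \<times> UNIV \<subseteq> A \<inter> (- Y) \<times> UNIV"
    by auto
  ultimately show ?thesis
    using rtrancl_mono by blast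
qed

lemma out_tree_with_leaves:
  assumes V: "finite V" "A \<subseteq> V \<times> V" "r \<in> V"
    and reach: "\<forall>y \<in> Y. (r, y) \<in> (A \<inter> (- Y) \<times> UNIV)\<^sup>*"
  shows "\<exists>U B. U \<subseteq> V \<and> out_tree A U B r \<and> Y \<subseteq> leaves U B"
proof -
  define A' where "A' = A \<inter> (- Y) \<times> UNIV"
  define U where "U = A'\<^sup>* `` {r}"
  have A': "A' \<subseteq> V \<times> V"
    using V(2) unfolding A'_def by blast
  obtain B where B: "out_tree A' U B r"
    using out_tree_of_reachable[OF V(1) A' V(3)] unfolding U_def by blast
  have "U \<subseteq> V"
    unfolding U_def using rtrancl_Image_subset[OF A' V(3)] .
  moreover have "out_tree A U B r"
    using out_tree_mono[OF B] unfolding A'_def by blast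
  moreover have "B \<subseteq> A'"
    using B unfolding out_tree_def is_outbranching_def by blast
  then have "Y \<subseteq> leaves U B"
    using reach unfolding leaves_def out_nbrs_def A'_def U_def by auto
  ultimately show ?thesis
    by blast
qed

theorem lemma5:
  fixes V :: "'a set" and A :: "('a \<times> 'a) set" and r :: 'a and k :: nat
  assumes "rooted_digraph V A r"
    and "reduced V A r"
    and "\<exists>x \<in> V. card (in_nbrs A x) \<ge> k"
  shows "\<exists>B. is_outbranching V A r B \<and> card (leaves V B) \<ge> k"
proof -
  have D: "finite V" "r \<in> V" "A \<subseteq> V \<times> V"
    using assms(1) unfolding rooted_digraph_def by auto
  have rule0: "\<forall>w \<in> V. (r, w) \<in> A\<^sup>*"
    using assms(2) unfolding reduced_def reach_avoid_def by simp
  obtain x where x: "x \<in> V" "k \<le> card (in_nbrs A x)"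
    using assms(3) by blast
  have rule3: "reach_avoid A (in_nbrs A x - {y}) r y" if "y \<in> in_nbrs A x" for y
    using assms(2) x(1) that unfolding reduced_def cuts_from_def by blast
  have reach: "\<forall>y \<in> in_nbrs A x. (r, y) \<in> (A \<inter> (- in_nbrs A x) \<times> UNIV)\<^sup>*"
    using reach_avoid_without_arcs_out_of[OF rule3] by blast
  obtain U T where T: "U \<subseteq> V" "out_tree A U T r" "in_nbrs A x \<subseteq> leaves U T"
    using out_tree_with_leaves[OF D(1,3,2) reach] by blast
  have "finite (leaves U T)"
    using finite_subset[OF T(1) D(1)] unfolding leaves_def by simp
  then have "k \<le> card (leaves U T)"
    using card_mono[OF _ T(3)] x(2) by simp
  moreover obtain B where "is_outbranching V A r B" "card (leaves U T) \<le> card (leaves V B)"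
    using outbranching_extending_out_tree[OF D(1,3) rule0 T(2,1)] by blast
  ultimately show ?thesis
    by auto
qed

end
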